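(* Let $p$ be an odd prime. Then the edge set of the complete graph $K_{p^2}$ can be partitioned into $(p^2-1)/4$ subgraphs, each isomorphic to $C_p \square C_p$.
   Context: $C_n$ denotes the cycle graph on $n$ vertices and $K_m$ the complete graph on $m$ vertices. For graphs $G=(V,E)$ and $G'=(V',E')$, the Cartesian product $G \square G'$ has vertex set $V\times V'$, with $\{(v,v'),(w,w')\}$ an edge iff either $\{v,w\}\in E$ and $v'=w'$, or $v=w$ and $\{v',w'\}\in E'$. Partitioning $K_m$ into copies of $G$ means decomposing its edge set into edge-disjoint subgraphs (on the vertex set of $K_m$) each isomorphic to $G$. *)

theory Defs
  imports Main "HOL-Computational_Algebra.Primes"
begin

type_synonym 'a graph = "'a set \<times> 'a set set"

definition verts :: "'a graph \<Rightarrow> 'a set" where "verts G = fst G"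
definition edges :: "'a graph \<Rightarrow> 'a set set" where "edges G = snd G"

text \<open>Cycle graph C_n on vertices 0..n-1 (meaningful for n >= 3).\<close>
definition cycle_graph :: "nat \<Rightarrow> nat graph" where
  "cycle_graph n = ({..<n}, {{i, Suc i mod n} | i. i < n})"

definition complete_graph :: "nat \<Rightarrow> nat graph" where
  "complete_graph m = ({..<m}, {{u, v} | u v. u < m \<and> v < m \<and> u \<noteq> v})"

definition cart_prod :: "'a graph \<Rightarrow> 'b graph \<Rightarrow> ('a \<times> 'b) graph" where
  "cart_prod G H = (verts G \<times> verts H,
     {{(v, v'), (w, v')} | v w v'. {v, w} \<in> edges G \<and> v' \<in> verts H}
     \<union> {{(v, v'), (v, w')} | v v' w'. v \<in> verts G \<and> {v', w'} \<in> edges H})"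

definition graph_iso :: "'a graph \<Rightarrow> 'b graph \<Rightarrow> bool" where
  "graph_iso G H \<longleftrightarrow> (\<exists>f. bij_betw f (verts G) (verts H) \<and>
                          (\<lambda>e. f ` e) ` edges G = edges H)"

definition edge_partition_into :: "'a graph \<Rightarrow> 'b graph \<Rightarrow> nat \<Rightarrow> bool" where
  "edge_partition_into K G k \<longleftrightarrow>
     (\<exists>H :: nat \<Rightarrow> 'a graph.
        (\<forall>i<k. verts (H i) \<subseteq> verts K \<and> edges (H i) \<subseteq> edges K \<and> graph_iso (H i) G) \<and>
        (\<forall>i<k. \<forall>j<k. i \<noteq> j \<longrightarrow> edges (H i) \<inter> edges (H j) = {}) \<and>
        (\<Union>i<k. edges (H i)) = edges K)"

end

theory Submission
  imports Defs "HOL-Number_Theory.Cong"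
begin

(* Identify the vertices of K_(p^2) with Z_p x Z_p.  If u, v are linearly independent over Z_p,
  then (a, b) |-> a u + b v is a bijection of Z_p x Z_p which maps C_p \<box> C_p onto the graph with
  edges {w, w + u} and {w, w + v}; such a copy uses exactly the edge directions +-u and +-v.
  The (p^2 - 1)/2 directions +-d, d \<noteq> 0, split into the (p^2 - 1)/4 independent pairs
  {+-(k, kt), +-(k, -kt)} (t \<noteq> 0) and {+-(k, 0), +-(0, k)}, with 1 \<le> k, 0 \<le> t and 2k, 2t < p:
  after fixing its sign, a non-vertical direction is (k, ks) with slope s = t or s = -t mod p.
  Since every edge of K_(p^2) has exactly one direction, these copies partition K_(p^2). *)

lemma verts_conv [simp]: "verts (V, E) = V"
  and edges_conv [simp]: "edges (V, E) = E"
  by (simp_all add: verts_def edges_def)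

lemma graph_iso_image:
  assumes f: "bij_betw f (verts G) V" and edges_in_verts: "\<forall>e\<in>edges G. e \<subseteq> verts G"
  shows "graph_iso (V, (\<lambda>e. f ` e) ` edges G) G"
proof -
  let ?g = "inv_into (verts G) f"
  have "?g ` f ` e = e" if "e \<in> edges G" for e
    using f edges_in_verts that by (simp add: bij_betw_def inv_into_image_cancel)
  then have "(\<lambda>e. ?g ` e) ` (\<lambda>e. f ` e) ` edges G = edges G"
    by (simp add: image_image)
  moreover have "bij_betw ?g V (verts G)"
    using f by (rule bij_betw_inv_into)
  ultimately show ?thesis
    unfolding graph_iso_def by auto
qed

lemma edge_partition_into_card:
  fixes H :: "'i \<Rightarrow> 'a graph"
  assumes "finite I"
    and "\<And>i. i \<in> I \<Longrightarrow> verts (H i) \<subseteq> verts K \<and> edges (H i) \<subseteq> edges K \<and> graph_iso (H i) G"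
    and "\<And>i j. i \<in> I \<Longrightarrow> j \<in> I \<Longrightarrow> i \<noteq> j \<Longrightarrow> edges (H i) \<inter> edges (H j) = {}"
    and "(\<Union>i\<in>I. edges (H i)) = edges K"
  shows "edge_partition_into K G (card I)"
proof -
  obtain h where h: "bij_betw h {..<card I} I"
    using ex_bij_betw_nat_finite[OF \<open>finite I\<close>] lessThan_atLeast0 by metis
  then have "(\<Union>i<card I. edges (H (h i))) = edges K"
    using assms(4) by (simp add: bij_betw_def image_comp[symmetric, of "edges \<circ> H" h, simplified comp_def])
  moreover have "h i \<in> I" if "i < card I" for i
    using h that by (auto simp: bij_betw_def)
  moreover have "h i \<noteq> h j" if "i < card I" "j < card I" "i \<noteq> j" for i j
    using h that by (auto simp: bij_betw_def inj_on_eq_iff)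
  ultimately show ?thesis
    unfolding edge_partition_into_def using assms(2,3)
    by (intro exI[of _ "H \<circ> h"]) simp
qed

lemma verts_cart_prod_cycle_graph:
  "verts (cart_prod (cycle_graph p) (cycle_graph q)) = {..<p} \<times> {..<q}"
  by (simp add: cart_prod_def cycle_graph_def)

lemma edges_cart_prod_cycle_graph:
  "edges (cart_prod (cycle_graph p) (cycle_graph q)) =
     {{(a, b), (Suc a mod p, b)} | a b. a < p \<and> b < q} \<union>
     {{(a, b), (a, Suc b mod q)} | a b. a < p \<and> b < q}"
proof -
  have cycle_edge: "{v, w} \<in> edges (cycle_graph n) \<longleftrightarrow>
      (\<exists>i<n. (v, w) = (i, Suc i mod n) \<or> (w, v) = (i, Suc i mod n))" for n v w
    unfolding cycle_graph_def by (auto simp: doubleton_eq_iff)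
  show ?thesis
    unfolding cart_prod_def edges_conv cycle_edge
    by (auto simp: cycle_graph_def insert_commute) blast+
qed

definition torus_code :: "nat \<Rightarrow> int \<Rightarrow> int \<Rightarrow> nat" where
  "torus_code n a b = nat ((a mod int n) * int n + b mod int n)"

lemma torus_code_eq_iff:
  assumes "0 < n"
  shows "torus_code n a b = torus_code n a' b' \<longleftrightarrow> int n dvd a - a' \<and> int n dvd b - b'"
proof -
  have digits_eq_iff: "(a mod int n) * int n + b mod int n = (a' mod int n) * int n + b' mod int n
      \<longleftrightarrow> a mod int n = a' mod int n \<and> b mod int n = b' mod int n"
  proof
    assume eq: "(a mod int n) * int n + b mod int n = (a' mod int n) * int n + b' mod int n"
    then have "((a mod int n) * int n + b mod int n) div int n =
        ((a' mod int n) * int n + b' mod int n) div int n"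
      by simp
    then have "a mod int n = a' mod int n"
      using assms by simp
    with eq show "a mod int n = a' mod int n \<and> b mod int n = b' mod int n"
      by simp
  qed simp
  have "0 \<le> (x mod int n) * int n + y mod int n" for x y
    using assms by simp
  then show ?thesis
    unfolding torus_code_def by (simp only: eq_nat_nat_iff digits_eq_iff mod_eq_dvd_iff)
qed

lemma torus_code_less:
  assumes "0 < n"
  shows "torus_code n a b < n\<^sup>2"
proof -
  have "a mod int n < int n" and "b mod int n < int n"
    using assms by simp_all
  then have "a mod int n + 1 \<le> int n" and "b mod int n < int n"
    by simp_all
  then have "(a mod int n) * int n + b mod int n < (a mod int n + 1) * int n"
    by (simp add: algebra_simps)
  also have "\<dots> \<le> int n * int n"
    using \<open>a mod int n + 1 \<le> int n\<close> by (simp add: mult_right_mono)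
  finally show ?thesis
    using assms unfolding torus_code_def by (subst nat_less_iff) (simp_all add: power2_eq_square)
qed

lemma torus_code_surj:
  assumes "x < n\<^sup>2"
  shows "\<exists>a b. x = torus_code n a b"
proof -
  have "x div n < n"
    using assms by (cases "n = 0") (simp_all add: div_less_iff_less_mult power2_eq_square)
  then have "(int x div int n) mod int n = int x div int n"
    by (simp flip: zdiv_int)
  then have "x = torus_code n (int x div int n) (int x mod int n)"
    unfolding torus_code_def by (metis mod_mod_trivial div_mult_mod_eq nat_int)
  then show ?thesis by blast
qed

lemma cong_pm_half_residues:
  fixes n a b \<epsilon> :: int
  assumes "0 \<le> a" "2 * a < n" "0 \<le> b" "2 * b < n" "\<epsilon> \<in> {1, -1}" "n dvd a - \<epsilon> * b"
  shows "a = b \<and> (\<epsilon> = -1 \<longrightarrow> a = 0)"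
proof -
  have "\<bar>a - \<epsilon> * b\<bar> < n"
    using assms(1-5) by auto
  then have "a - \<epsilon> * b = 0"
    using assms(6) dvd_imp_le_int[of "a - \<epsilon> * b" n] by linarith
  then show ?thesis
    using assms(1,3,5) by auto
qed

lemma ex_half_residue:
  fixes n z :: int
  assumes "0 < n" "odd n"
  shows "\<exists>t \<sigma>. 0 \<le> t \<and> 2 * t < n \<and> \<sigma> \<in> {1, -1} \<and> n dvd z - \<sigma> * t"
proof -
  define r where "r = z mod n"
  have r: "0 \<le> r" "r < n" "n dvd z - r"
    using assms(1) by (simp_all add: r_def mod_eq_dvd_iff[symmetric])
  show ?thesis
  proof (cases "2 * r < n")
    case True
    with r show ?thesis by (intro exI[of _ r] exI[of _ 1]) simp
  next
    case False
    moreover have "2 * r \<noteq> n"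
      using assms(2) by auto
    ultimately have "n < 2 * r"
      by simp
    moreover have "n dvd z - (-1) * (n - r)"
      using dvd_add[OF r(3) dvd_refl[of n]] by (simp add: algebra_simps)
    ultimately show ?thesis
      using r by (intro exI[of _ "n - r"] exI[of _ "-1"]) simp
  qed
qed

lemma ex_half_residue_nonzero:
  fixes n z :: int
  assumes "0 < n" "odd n" "\<not> n dvd z"
  shows "\<exists>k \<epsilon>. 1 \<le> k \<and> 2 * k < n \<and> \<epsilon> \<in> {1, -1} \<and> n dvd z - \<epsilon> * k"
proof -
  obtain t \<sigma> where t: "0 \<le> t" "2 * t < n" "\<sigma> \<in> {1, -1}" "n dvd z - \<sigma> * t"
    using ex_half_residue[OF assms(1,2)] by blast
  moreover have "t \<noteq> 0"
    using t(4) assms(3) by auto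
  ultimately show ?thesis
    by (intro exI[of _ t] exI[of _ \<sigma>]) simp
qed

definition det2 :: "int \<times> int \<Rightarrow> int \<times> int \<Rightarrow> int" where
  "det2 u v = fst u * snd v - snd u * fst v"

locale odd_prime =
  fixes p :: nat
  assumes prime_p: "prime p" and odd_p: "odd p"
begin

lemma p_pos: "0 < p"
  using prime_p by (simp add: prime_gt_0_nat)

lemma p_ge_3: "3 \<le> p"
  using prime_p odd_p prime_ge_2_nat[of p] by (cases "p = 2") auto

lemma p_dvd_mult_iff: "int p dvd x * y \<longleftrightarrow> int p dvd x \<or> int p dvd y"
  using prime_p by (simp add: prime_dvd_mult_iff)

lemma not_p_dvd_small: "0 < z \<Longrightarrow> 2 * z < int p \<Longrightarrow> \<not> int p dvd z"
  by (simp add: zdvd_not_zless)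

lemma eq_if_p_dvd_diff: "a < p \<Longrightarrow> b < p \<Longrightarrow> int p dvd int a - int b \<Longrightarrow> a = b"
  by (metis cong_iff_dvd_diff cong_int_iff cong_less_modulus_unique_nat)

abbreviation code :: "int \<Rightarrow> int \<Rightarrow> nat" where
  "code \<equiv> torus_code p"

lemmas code_eq_iff = torus_code_eq_iff[OF p_pos]

abbreviation torus :: "(nat \<times> nat) graph" where
  "torus \<equiv> cart_prod (cycle_graph p) (cycle_graph p)"

definition lin_map :: "int \<times> int \<Rightarrow> int \<times> int \<Rightarrow> nat \<times> nat \<Rightarrow> nat" where
  "lin_map u v = (\<lambda>(a, b). code (int a * fst u + int b * fst v) (int a * snd u + int b * snd v))"

definition torus_copy :: "int \<times> int \<Rightarrow> int \<times> int \<Rightarrow> nat graph" where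
  "torus_copy u v = ({..<p\<^sup>2}, (\<lambda>e. lin_map u v ` e) ` edges torus)"

lemma lin_map_inj_on:
  assumes indep: "\<not> int p dvd det2 u v"
  shows "inj_on (lin_map u v) ({..<p} \<times> {..<p})"
proof (rule inj_onI, clarsimp)
  fix a b a' b' :: nat
  assume ab: "a < p" "b < p" "a' < p" "b' < p" and eq: "lin_map u v (a, b) = lin_map u v (a', b')"
  define x y where "x = int a - int a'" and "y = int b - int b'"
  have "int p dvd x * fst u + y * fst v" "int p dvd x * snd u + y * snd v"
    using eq by (simp_all add: lin_map_def code_eq_iff x_def y_def algebra_simps)
  moreover have "x * det2 u v = snd v * (x * fst u + y * fst v) - fst v * (x * snd u + y * snd v)"
    and "y * det2 u v = fst u * (x * snd u + y * snd v) - snd u * (x * fst u + y * fst v)"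
    by (simp_all add: det2_def algebra_simps)
  ultimately have "int p dvd x * det2 u v" "int p dvd y * det2 u v"
    by simp_all
  then have "int p dvd x" "int p dvd y"
    using indep by (simp_all add: p_dvd_mult_iff)
  then show "a = a' \<and> b = b'"
    using ab eq_if_p_dvd_diff by (simp add: x_def y_def)
qed

lemma lin_map_bij_betw:
  assumes indep: "\<not> int p dvd det2 u v"
  shows "bij_betw (lin_map u v) ({..<p} \<times> {..<p}) {..<p\<^sup>2}"
proof -
  note inj = lin_map_inj_on[OF indep]
  have "lin_map u v ` ({..<p} \<times> {..<p}) \<subseteq> {..<p\<^sup>2}"
    by (auto simp: lin_map_def torus_code_less[OF p_pos])
  moreover have "card (lin_map u v ` ({..<p} \<times> {..<p})) = card {..<p\<^sup>2}"
    using card_image[OF inj] by (simp add: card_cartesian_product power2_eq_square)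
  ultimately have "lin_map u v ` ({..<p} \<times> {..<p}) = {..<p\<^sup>2}"
    by (simp add: card_subset_eq)
  with inj show ?thesis
    by (simp add: bij_betw_def)
qed

lemma torus_copy_iso:
  assumes "\<not> int p dvd det2 u v"
  shows "graph_iso (torus_copy u v) torus"
proof -
  have "\<forall>e\<in>edges torus. e \<subseteq> verts torus"
    using p_pos by (auto simp: edges_cart_prod_cycle_graph verts_cart_prod_cycle_graph)
  then show ?thesis
    unfolding torus_copy_def
    using graph_iso_image lin_map_bij_betw[OF assms] verts_cart_prod_cycle_graph by metis
qed

lemma p_dvd_Suc_mod: "int p dvd int (Suc a mod p) - (int a + 1)"
  by (simp add: mod_eq_dvd_iff[symmetric] zmod_int add.commute)

lemma lin_map_Suc_fst:
  assumes "lin_map u v (a, b) = code w1 w2"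
  shows "lin_map u v (Suc a mod p, b) = code (w1 + fst u) (w2 + snd u)"
proof -
  have "int p dvd (int (Suc a mod p) - (int a + 1)) * fst u + (int a * fst u + int b * fst v - w1)"
    and "int p dvd (int (Suc a mod p) - (int a + 1)) * snd u + (int a * snd u + int b * snd v - w2)"
    using assms p_dvd_Suc_mod by (simp_all add: lin_map_def code_eq_iff)
  then show ?thesis
    by (simp add: lin_map_def code_eq_iff algebra_simps)
qed

lemma lin_map_Suc_snd:
  assumes "lin_map u v (a, b) = code w1 w2"
  shows "lin_map u v (a, Suc b mod p) = code (w1 + fst v) (w2 + snd v)"
proof -
  have "int p dvd (int (Suc b mod p) - (int b + 1)) * fst v + (int a * fst u + int b * fst v - w1)"
    and "int p dvd (int (Suc b mod p) - (int b + 1)) * snd v + (int a * snd u + int b * snd v - w2)"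
    using assms p_dvd_Suc_mod by (simp_all add: lin_map_def code_eq_iff)
  then show ?thesis
    by (simp add: lin_map_def code_eq_iff algebra_simps)
qed

lemma edges_torus_copy:
  assumes indep: "\<not> int p dvd det2 u v"
  shows "e \<in> edges (torus_copy u v) \<longleftrightarrow>
    (\<exists>w1 w2 d. d \<in> {u, v} \<and> e = {code w1 w2, code (w1 + fst d) (w2 + snd d)})"
proof
  assume "e \<in> edges (torus_copy u v)"
  then obtain x where x: "x \<in> edges torus" "e = lin_map u v ` x"
    by (auto simp: torus_copy_def)
  then obtain a b where "x = {(a, b), (Suc a mod p, b)} \<or> x = {(a, b), (a, Suc b mod p)}"
    unfolding edges_cart_prod_cycle_graph by blast
  moreover obtain w1 w2 where w: "lin_map u v (a, b) = code w1 w2"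
    by (simp add: lin_map_def)
  ultimately have "e = {code w1 w2, code (w1 + fst u) (w2 + snd u)} \<or>
      e = {code w1 w2, code (w1 + fst v) (w2 + snd v)}"
    using x(2) by (auto simp: w lin_map_Suc_fst[OF w] lin_map_Suc_snd[OF w])
  then show "\<exists>w1 w2 d. d \<in> {u, v} \<and> e = {code w1 w2, code (w1 + fst d) (w2 + snd d)}"
    by blast
next
  assume "\<exists>w1 w2 d. d \<in> {u, v} \<and> e = {code w1 w2, code (w1 + fst d) (w2 + snd d)}"
  then obtain w1 w2 d where d: "d \<in> {u, v}" and e: "e = {code w1 w2, code (w1 + fst d) (w2 + snd d)}"
    by blast
  have "code w1 w2 \<in> lin_map u v ` ({..<p} \<times> {..<p})"
    using lin_map_bij_betw[OF indep] torus_code_less[OF p_pos] by (simp add: bij_betw_def)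
  then obtain a b where ab: "a < p" "b < p" "lin_map u v (a, b) = code w1 w2"
    by auto
  have "{(a, b), (Suc a mod p, b)} \<in> edges torus"
    using ab by (auto simp: edges_cart_prod_cycle_graph)
  moreover have "lin_map u v ` {(a, b), (Suc a mod p, b)} = {code w1 w2, code (w1 + fst u) (w2 + snd u)}"
    using ab(3) lin_map_Suc_fst by (simp del: insert_image)
  ultimately have u: "{code w1 w2, code (w1 + fst u) (w2 + snd u)} \<in> edges (torus_copy u v)"
    unfolding torus_copy_def edges_conv by (metis rev_image_eqI)
  have "{(a, b), (a, Suc b mod p)} \<in> edges torus"
    using ab by (auto simp: edges_cart_prod_cycle_graph)
  moreover have "lin_map u v ` {(a, b), (a, Suc b mod p)} = {code w1 w2, code (w1 + fst v) (w2 + snd v)}"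
    using ab(3) lin_map_Suc_snd by (simp del: insert_image)
  ultimately have v: "{code w1 w2, code (w1 + fst v) (w2 + snd v)} \<in> edges (torus_copy u v)"
    unfolding torus_copy_def edges_conv by (metis rev_image_eqI)
  from d e u v show "e \<in> edges (torus_copy u v)"
    by blast
qed

lemma torus_copy_subgraph:
  assumes indep: "\<not> int p dvd det2 u v"
  shows "verts (torus_copy u v) \<subseteq> verts (complete_graph (p\<^sup>2))"
    and "edges (torus_copy u v) \<subseteq> edges (complete_graph (p\<^sup>2))"
proof -
  show "verts (torus_copy u v) \<subseteq> verts (complete_graph (p\<^sup>2))"
    by (simp add: torus_copy_def complete_graph_def)
  show "edges (torus_copy u v) \<subseteq> edges (complete_graph (p\<^sup>2))"
  proof
    fix e assume "e \<in> edges (torus_copy u v)"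
    then obtain w1 w2 d where d: "d \<in> {u, v}" and e: "e = {code w1 w2, code (w1 + fst d) (w2 + snd d)}"
      unfolding edges_torus_copy[OF indep] by blast
    have "\<not> (int p dvd fst d \<and> int p dvd snd d)"
      using d indep by (auto simp: det2_def intro: dvd_diff dvd_mult dvd_mult2)
    then have "code w1 w2 \<noteq> code (w1 + fst d) (w2 + snd d)"
      by (simp add: code_eq_iff)
    then show "e \<in> edges (complete_graph (p\<^sup>2))"
      unfolding complete_graph_def edges_conv e
      by (intro CollectI exI[of _ "code w1 w2"] exI[of _ "code (w1 + fst d) (w2 + snd d)"])
        (simp add: torus_code_less[OF p_pos])
  qed
qed

lemma code_edge_direction:
  assumes "{code w1 w2, code (w1 + fst d) (w2 + snd d)} = {code w1' w2', code (w1' + fst d') (w2' + snd d')}"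
  shows "\<exists>\<epsilon>\<in>{1, -1}. int p dvd fst d - \<epsilon> * fst d' \<and> int p dvd snd d - \<epsilon> * snd d'"
  using assms unfolding doubleton_eq_iff
proof (elim disjE conjE)
  assume "code w1 w2 = code w1' w2'"
    and "code (w1 + fst d) (w2 + snd d) = code (w1' + fst d') (w2' + snd d')"
  then have "int p dvd w1 + fst d - (w1' + fst d')" "int p dvd w1 - w1'"
    and "int p dvd w2 + snd d - (w2' + snd d')" "int p dvd w2 - w2'"
    by (simp_all add: code_eq_iff)
  then have "int p dvd (w1 + fst d - (w1' + fst d')) - (w1 - w1')"
    and "int p dvd (w2 + snd d - (w2' + snd d')) - (w2 - w2')"
    by (simp_all only: dvd_diff)
  then show ?thesis
    by (intro bexI[of _ 1]) (simp_all add: algebra_simps)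
next
  assume "code w1 w2 = code (w1' + fst d') (w2' + snd d')"
    and "code (w1 + fst d) (w2 + snd d) = code w1' w2'"
  then have "int p dvd w1 + fst d - w1'" "int p dvd w1 - (w1' + fst d')"
    and "int p dvd w2 + snd d - w2'" "int p dvd w2 - (w2' + snd d')"
    by (simp_all add: code_eq_iff)
  then have "int p dvd (w1 + fst d - w1') - (w1 - (w1' + fst d'))"
    and "int p dvd (w2 + snd d - w2') - (w2 - (w2' + snd d'))"
    by (simp_all only: dvd_diff)
  then show ?thesis
    by (intro bexI[of _ "-1"]) (simp_all add: algebra_simps)
qed

lemma code_edge_of_direction:
  assumes \<epsilon>: "\<epsilon> \<in> {1, -1}" "int p dvd y1 - x1 - \<epsilon> * fst d" "int p dvd y2 - x2 - \<epsilon> * snd d"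
  shows "\<exists>w1 w2. {code x1 x2, code y1 y2} = {code w1 w2, code (w1 + fst d) (w2 + snd d)}"
proof -
  consider "\<epsilon> = 1" | "\<epsilon> = -1"
    using \<epsilon>(1) by blast
  then show ?thesis
  proof cases
    case 1
    then have "y1 - (x1 + fst d) = y1 - x1 - \<epsilon> * fst d" "y2 - (x2 + snd d) = y2 - x2 - \<epsilon> * snd d"
      by simp_all
    with \<epsilon>(2,3) have "int p dvd y1 - (x1 + fst d)" "int p dvd y2 - (x2 + snd d)"
      by (simp_all only:)
    then have "code y1 y2 = code (x1 + fst d) (x2 + snd d)"
      by (simp add: code_eq_iff)
    then show ?thesis
      by auto
  next
    case 2
    then have "x1 - (y1 + fst d) = - (y1 - x1 - \<epsilon> * fst d)" "x2 - (y2 + snd d) = - (y2 - x2 - \<epsilon> * snd d)"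
      by simp_all
    with \<epsilon>(2,3) have "int p dvd x1 - (y1 + fst d)" "int p dvd x2 - (y2 + snd d)"
      by (simp_all only: dvd_minus_iff)
    then have "code x1 x2 = code (y1 + fst d) (y2 + snd d)"
      by (simp add: code_eq_iff)
    then show ?thesis
      by (auto simp: insert_commute)
  qed
qed

lemma ex_inverse_mod_p:
  assumes "\<not> int p dvd k"
  shows "\<exists>j. int p dvd k * j - 1"
proof -
  have "coprime k (int p)"
    using prime_imp_coprime[of "int p" k] prime_p assms by (simp add: coprime_commute)
  then obtain j where "[k * j = 1] (mod int p)"
    using cong_solve_coprime_int by blast
  then show ?thesis
    by (auto simp: cong_iff_dvd_diff)
qed

definition labels :: "(int \<times> int) set" where
  "labels = {(k, t). 1 \<le> k \<and> 2 * k < int p \<and> 0 \<le> t \<and> 2 * t < int p}"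

definition gen_u :: "int \<Rightarrow> int \<Rightarrow> int \<times> int" where
  "gen_u k t = (k, k * t)"

text \<open>For \<open>t = 0\<close> the slope \<open>-t\<close> would repeat \<open>gen_u\<close>; the vertical direction takes its place.\<close>

definition gen_v :: "int \<Rightarrow> int \<Rightarrow> int \<times> int" where
  "gen_v k t = (if t = 0 then (0, k) else (k, - (k * t)))"

definition label_copy :: "int \<times> int \<Rightarrow> nat graph" where
  "label_copy = (\<lambda>(k, t). torus_copy (gen_u k t) (gen_v k t))"

lemma not_p_dvd_det2_gens:
  assumes "(k, t) \<in> labels"
  shows "\<not> int p dvd det2 (gen_u k t) (gen_v k t)"
proof (cases "t = 0")
  case True
  have "\<not> int p dvd k"
    using assms not_p_dvd_small by (simp add: labels_def)
  with True show ?thesis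
    by (simp add: det2_def gen_u_def gen_v_def p_dvd_mult_iff)
next
  case False
  have "\<not> int p dvd k" "\<not> int p dvd t"
    using assms False not_p_dvd_small by (auto simp: labels_def)
  moreover have "\<not> int p dvd 2"
    using p_ge_3 by (simp add: zdvd_not_zless)
  moreover have "det2 (gen_u k t) (gen_v k t) = - (2 * (k * (k * t)))"
    using False by (simp add: det2_def gen_u_def gen_v_def algebra_simps)
  ultimately show ?thesis
    by (simp add: p_dvd_mult_iff)
qed

lemma gens_cases:
  assumes "d \<in> {gen_u k t, gen_v k t}"
  obtains \<sigma> where "\<sigma> \<in> {1, -1}" "d = (k, k * (\<sigma> * t))"
  | "t = 0" "d = (0, k)"
proof -
  consider "d = gen_u k t" | "d = gen_v k t"
    using assms by blast
  then show thesis
  proof cases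
    case 1
    then show thesis
      using that(1)[of 1] by (simp add: gen_u_def)
  next
    case 2
    then show thesis
      using that(1)[of "-1"] that(2) by (cases "t = 0") (simp_all add: gen_v_def)
  qed
qed

lemma gens_unique:
  assumes l: "(k, t) \<in> labels" "(k', t') \<in> labels"
    and d: "d \<in> {gen_u k t, gen_v k t}" "d' \<in> {gen_u k' t', gen_v k' t'}"
    and \<epsilon>: "\<epsilon> \<in> {1, -1}" "int p dvd fst d - \<epsilon> * fst d'" "int p dvd snd d - \<epsilon> * snd d'"
  shows "(k, t) = (k', t')"
proof -
  have k: "1 \<le> k" "2 * k < int p" and k': "1 \<le> k'" "2 * k' < int p"
   and t: "0 \<le> t" "2 * t < int p" and t': "0 \<le> t'" "2 * t' < int p"
    using l by (simp_all add: labels_def)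
  show ?thesis
  proof (cases rule: gens_cases[OF d(1)]; cases rule: gens_cases[OF d(2)])
    fix \<sigma> \<sigma>' assume \<sigma>: "\<sigma> \<in> {1, -1}" "d = (k, k * (\<sigma> * t))"
      and \<sigma>': "\<sigma>' \<in> {1, -1}" "d' = (k', k' * (\<sigma>' * t'))"
    have "k = k' \<and> (\<epsilon> = -1 \<longrightarrow> k = 0)"
      using cong_pm_half_residues[of k "int p" k' \<epsilon>] k k' \<epsilon> \<sigma> \<sigma>' by simp
    then have "k = k'" "\<epsilon> = 1"
      using k \<epsilon>(1) by auto
    then have "int p dvd k * (\<sigma> * t - \<sigma>' * t')"
      using \<epsilon>(3) \<sigma> \<sigma>' by (simp add: algebra_simps)
    then have "int p dvd \<sigma> * (\<sigma> * t - \<sigma>' * t')"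
      using k not_p_dvd_small by (simp add: p_dvd_mult_iff)
    moreover have "\<sigma> * (\<sigma> * t - \<sigma>' * t') = t - (\<sigma> * \<sigma>') * t'" "\<sigma> * \<sigma>' \<in> {1, -1}"
      using \<sigma> \<sigma>' by auto
    ultimately have "t = t'"
      using cong_pm_half_residues[of t "int p" t' "\<sigma> * \<sigma>'"] t t' by simp
    with \<open>k = k'\<close> show ?thesis
      by simp
  next
    fix \<sigma> assume "d = (k, k * (\<sigma> * t))" "d' = (0, k')"
    then show ?thesis
      using \<epsilon>(2) k not_p_dvd_small by simp
  next
    fix \<sigma>' assume "d = (0, k)" "d' = (k', k' * (\<sigma>' * t'))"
    then have "int p dvd \<epsilon> * k'"
      using \<epsilon>(2) by (simp add: dvd_diff_commute)
    then show ?thesis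
      using \<epsilon>(1) k' not_p_dvd_small by auto
  next
    assume "t = 0" "d = (0, k)" "t' = 0" "d' = (0, k')"
    then show ?thesis
      using cong_pm_half_residues[of k "int p" k' \<epsilon>] k k' \<epsilon> by simp
  qed
qed

lemma gens_exist:
  assumes "\<not> (int p dvd d1 \<and> int p dvd d2)"
  shows "\<exists>k t d \<epsilon>. (k, t) \<in> labels \<and> d \<in> {gen_u k t, gen_v k t} \<and> \<epsilon> \<in> {1, -1} \<and>
    int p dvd d1 - \<epsilon> * fst d \<and> int p dvd d2 - \<epsilon> * snd d"
proof (cases "int p dvd d1")
  case True
  then obtain k \<epsilon> where k: "1 \<le> k" "2 * k < int p" "\<epsilon> \<in> {1, -1}" "int p dvd d2 - \<epsilon> * k"
    using assms ex_half_residue_nonzero[of "int p" d2] p_pos odd_p by auto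
  then have "(k, 0) \<in> labels" "(0, k) \<in> {gen_u k 0, gen_v k 0}"
    by (simp_all add: labels_def gen_v_def)
  with k True show ?thesis
    by fastforce
next
  case False
  then obtain k \<epsilon> where k: "1 \<le> k" "2 * k < int p" "\<epsilon> \<in> {1, -1}" "int p dvd d1 - \<epsilon> * k"
    using ex_half_residue_nonzero[of "int p" d1] p_pos odd_p by auto
  have "\<not> int p dvd k"
    using k(1,2) not_p_dvd_small by simp
  then obtain j where j: "int p dvd k * j - 1"
    using ex_inverse_mod_p by blast
  \<comment> \<open>\<open>\<epsilon> * j * d2\<close> is the slope \<open>d2 / d1\<close> modulo \<open>p\<close>\<close>
  obtain t \<sigma> where t: "0 \<le> t" "2 * t < int p" "\<sigma> \<in> {1, -1}" "int p dvd \<epsilon> * j * d2 - \<sigma> * t"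
    using ex_half_residue[of "int p" "\<epsilon> * j * d2"] p_pos odd_p by auto
  have "(k, t) \<in> labels"
    using k t by (simp add: labels_def)
  moreover have "(k, k * (\<sigma> * t)) \<in> {gen_u k t, gen_v k t}"
    using t(3) by (auto simp: gen_u_def gen_v_def)
  moreover have "d2 - \<epsilon> * (k * (\<sigma> * t)) = \<epsilon> * k * (\<epsilon> * j * d2 - \<sigma> * t) - d2 * (k * j - 1)"
    using k(3) by (auto simp: algebra_simps)
  then have "int p dvd d2 - \<epsilon> * (k * (\<sigma> * t))"
    using j t(4) by simp
  ultimately show ?thesis
    using k by fastforce
qed

lemma edges_label_copy:
  assumes "(k, t) \<in> labels"
  shows "e \<in> edges (label_copy (k, t)) \<longleftrightarrow>
    (\<exists>w1 w2 d. d \<in> {gen_u k t, gen_v k t} \<and> e = {code w1 w2, code (w1 + fst d) (w2 + snd d)})"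
  unfolding label_copy_def using edges_torus_copy[OF not_p_dvd_det2_gens[OF assms]] by simp

lemma label_copies_disjoint:
  assumes l: "(k, t) \<in> labels" "(k', t') \<in> labels"
    and e: "e \<in> edges (label_copy (k, t))" "e \<in> edges (label_copy (k', t'))"
  shows "(k, t) = (k', t')"
proof -
  obtain w1 w2 d w1' w2' d' where d: "d \<in> {gen_u k t, gen_v k t}" "d' \<in> {gen_u k' t', gen_v k' t'}"
    and "e = {code w1 w2, code (w1 + fst d) (w2 + snd d)}"
    and "e = {code w1' w2', code (w1' + fst d') (w2' + snd d')}"
    using e unfolding edges_label_copy[OF l(1)] edges_label_copy[OF l(2)] by blast
  then obtain \<epsilon> where "\<epsilon> \<in> {1, -1}" "int p dvd fst d - \<epsilon> * fst d'" "int p dvd snd d - \<epsilon> * snd d'"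
    using code_edge_direction by metis
  with l d show ?thesis
    by (rule gens_unique)
qed

lemma label_copies_cover:
  assumes "x < p\<^sup>2" "y < p\<^sup>2" "x \<noteq> y"
  shows "\<exists>l\<in>labels. {x, y} \<in> edges (label_copy l)"
proof -
  obtain x1 x2 y1 y2 where xy: "x = code x1 x2" "y = code y1 y2"
    using assms torus_code_surj by metis
  then have "\<not> (int p dvd y1 - x1 \<and> int p dvd y2 - x2)"
    using assms(3) by (auto simp: code_eq_iff dvd_diff_commute)
  then obtain k t d \<epsilon> where l: "(k, t) \<in> labels" and d: "d \<in> {gen_u k t, gen_v k t}"
    and \<epsilon>: "\<epsilon> \<in> {1, -1}" "int p dvd y1 - x1 - \<epsilon> * fst d" "int p dvd y2 - x2 - \<epsilon> * snd d"
    using gens_exist by blast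
  obtain w1 w2 where "{x, y} = {code w1 w2, code (w1 + fst d) (w2 + snd d)}"
    using code_edge_of_direction[OF \<epsilon>] unfolding xy by blast
  with d have "{x, y} \<in> edges (label_copy (k, t))"
    unfolding edges_label_copy[OF l] by blast
  with l show ?thesis
    by blast
qed

lemma label_copy_subgraph_iso:
  assumes "l \<in> labels"
  shows "verts (label_copy l) \<subseteq> verts (complete_graph (p\<^sup>2)) \<and>
    edges (label_copy l) \<subseteq> edges (complete_graph (p\<^sup>2)) \<and> graph_iso (label_copy l) torus"
proof -
  obtain k t where l: "l = (k, t)"
    by (cases l)
  with assms have indep: "\<not> int p dvd det2 (gen_u k t) (gen_v k t)"
    by (simp add: not_p_dvd_det2_gens)
  show ?thesis
    using torus_copy_subgraph[OF indep] torus_copy_iso[OF indep] by (simp add: l label_copy_def)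
qed

lemma label_copies_partition:
  "edge_partition_into (complete_graph (p\<^sup>2)) torus (card labels)"
proof (rule edge_partition_into_card)
  show "finite labels"
    by (rule finite_subset[of _ "{1..int p} \<times> {0..int p}"]) (auto simp: labels_def)
  show "l \<in> labels \<Longrightarrow> verts (label_copy l) \<subseteq> verts (complete_graph (p\<^sup>2)) \<and>
      edges (label_copy l) \<subseteq> edges (complete_graph (p\<^sup>2)) \<and> graph_iso (label_copy l) torus" for l
    by (rule label_copy_subgraph_iso)
  show "l \<in> labels \<Longrightarrow> l' \<in> labels \<Longrightarrow> l \<noteq> l' \<Longrightarrow> edges (label_copy l) \<inter> edges (label_copy l') = {}"
    for l l'
    by (cases l, cases l') (auto dest: label_copies_disjoint)
  have "e \<in> (\<Union>l\<in>labels. edges (label_copy l))" if "e \<in> edges (complete_graph (p\<^sup>2))" for e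
    using that label_copies_cover by (auto simp: complete_graph_def)
  then show "(\<Union>l\<in>labels. edges (label_copy l)) = edges (complete_graph (p\<^sup>2))"
    using label_copy_subgraph_iso by blast
qed

lemma card_labels: "card labels = (p\<^sup>2 - 1) div 4"
proof -
  obtain q where q: "p = 2 * q + 1"
    using odd_p oddE by blast
  have "labels = {1..int q} \<times> {0..int q}"
    unfolding labels_def by (auto simp: q)
  then have "card labels = q * (q + 1)"
    by (simp add: card_cartesian_product nat_add_distrib)
  moreover have "p\<^sup>2 - 1 = 4 * (q * (q + 1))"
    by (simp add: q power2_eq_square algebra_simps)
  ultimately show ?thesis
    by simp
qed

end

theorem theorem1:
  fixes p :: nat
  assumes "prime p" and "odd p"
  shows "edge_partition_into (complete_graph (p^2))
           (cart_prod (cycle_graph p) (cycle_graph p)) ((p^2 - 1) div 4)"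
proof -
  interpret odd_prime p
    using assms by unfold_locales
  show ?thesis
    using label_copies_partition card_labels by simp
qed

end
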